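(* Let $(X,d)$ be a metric space, $x_0\in X$, $n\geq 1$, and let $e$ be the identity of $\pi_n(X,x_0)$. For all $a,b\in\pi_n(X,x_0)$, $\rho(ab,e)\leq\max\{\rho(a,e),\rho(b,e)\}$.
   Context: $\Omega^n(X,x_0)$ is the set of continuous maps $\alpha:[0,1]^n\to X$ with $\alpha(\partial[0,1]^n)=\{x_0\}$, with uniform metric $\mu(\alpha,\beta)=\sup_{t\in[0,1]^n}d(\alpha(t),\beta(t))$. For $a,b\in\pi_n(X,x_0)$, $\rho(a,b)=\inf\{\mu(\alpha,\beta)\mid\alpha\in a,\beta\in b\}$. *)

theory Defs
  imports "HOL-Analysis.Analysis"
begin

text \<open>The unit n-cube [0,1]^n, with points represented as functions nat \<Rightarrow> real
  whose coordinates i < n lie in [0,1] and whose coordinates i \<ge> n are 0.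
  The topology is the (product) topology on nat \<Rightarrow> real, which restricted to the
  cube is the usual topology of [0,1]^n.\<close>

definition cube :: "nat \<Rightarrow> (nat \<Rightarrow> real) set" where
  "cube n = {t. (\<forall>i<n. 0 \<le> t i \<and> t i \<le> 1) \<and> (\<forall>i\<ge>n. t i = 0)}"

definition cube_boundary :: "nat \<Rightarrow> (nat \<Rightarrow> real) set" where
  "cube_boundary n = {t \<in> cube n. \<exists>i<n. t i = 0 \<or> t i = 1}"

definition Omega :: "nat \<Rightarrow> 'a::metric_space set \<Rightarrow> 'a \<Rightarrow> ((nat \<Rightarrow> real) \<Rightarrow> 'a) set" where
  "Omega n X x0 = {\<alpha>. continuous_on (cube n) \<alpha> \<and> \<alpha> ` cube n \<subseteq> X
                       \<and> (\<forall>t\<in>cube_boundary n. \<alpha> t = x0)}"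

definition htpy_rel :: "nat \<Rightarrow> 'a::metric_space set \<Rightarrow> 'a
    \<Rightarrow> (((nat \<Rightarrow> real) \<Rightarrow> 'a) \<times> ((nat \<Rightarrow> real) \<Rightarrow> 'a)) set" where
  "htpy_rel n X x0 = {(\<alpha>, \<beta>). \<alpha> \<in> Omega n X x0 \<and> \<beta> \<in> Omega n X x0 \<and>
      homotopic_with_canon (\<lambda>h. \<forall>t\<in>cube_boundary n. h t = x0) (cube n) X \<alpha> \<beta>}"

definition pi_n :: "nat \<Rightarrow> 'a::metric_space set \<Rightarrow> 'a \<Rightarrow> ((nat \<Rightarrow> real) \<Rightarrow> 'a) set set" where
  "pi_n n X x0 = Omega n X x0 // htpy_rel n X x0"

definition concat_cube :: "((nat \<Rightarrow> real) \<Rightarrow> 'a) \<Rightarrow> ((nat \<Rightarrow> real) \<Rightarrow> 'a) \<Rightarrow> (nat \<Rightarrow> real) \<Rightarrow> 'a" where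
  "concat_cube \<alpha> \<beta> t = (if t 0 \<le> 1/2 then \<alpha> (t(0 := 2 * t 0)) else \<beta> (t(0 := 2 * t 0 - 1)))"

definition pi_mult :: "nat \<Rightarrow> 'a::metric_space set \<Rightarrow> 'a
    \<Rightarrow> ((nat \<Rightarrow> real) \<Rightarrow> 'a) set \<Rightarrow> ((nat \<Rightarrow> real) \<Rightarrow> 'a) set \<Rightarrow> ((nat \<Rightarrow> real) \<Rightarrow> 'a) set" where
  "pi_mult n X x0 a b = htpy_rel n X x0 `` {concat_cube (SOME \<alpha>. \<alpha> \<in> a) (SOME \<beta>. \<beta> \<in> b)}"

definition pi_one :: "nat \<Rightarrow> 'a::metric_space set \<Rightarrow> 'a \<Rightarrow> ((nat \<Rightarrow> real) \<Rightarrow> 'a) set" where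
  "pi_one n X x0 = htpy_rel n X x0 `` {\<lambda>t. x0}"

definition mu :: "nat \<Rightarrow> ((nat \<Rightarrow> real) \<Rightarrow> 'a::metric_space) \<Rightarrow> ((nat \<Rightarrow> real) \<Rightarrow> 'a) \<Rightarrow> real" where
  "mu n \<alpha> \<beta> = (SUP t\<in>cube n. dist (\<alpha> t) (\<beta> t))"

definition rho :: "nat \<Rightarrow> ((nat \<Rightarrow> real) \<Rightarrow> 'a::metric_space) set \<Rightarrow> ((nat \<Rightarrow> real) \<Rightarrow> 'a) set \<Rightarrow> real" where
  "rho n a b = Inf {mu n \<alpha> \<beta> | \<alpha> \<beta>. \<alpha> \<in> a \<and> \<beta> \<in> b}"

end

theory Submission
  imports Defs
begin

text \<open>Concatenation in the first coordinate respects homotopy relative to the boundary. Hence if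
  \<alpha> \<in> a, \<beta> \<in> b and \<gamma>, \<delta> represent the identity e, then the concatenation of \<alpha> and \<beta>
  represents ab, and that of \<gamma> and \<delta> represents e again. At every point of the cube the two
  concatenations are \<alpha>, \<gamma> or \<beta>, \<delta> evaluated at one rescaled point, so their uniform distance
  is at most max(\<mu>(\<alpha>,\<gamma>), \<mu>(\<beta>,\<delta>)). Choosing both pairs within \<epsilon> of the infima
  \<rho>(a,e) and \<rho>(b,e) proves the inequality.\<close>

lemma cube_eq_PiE: "cube n = PiE UNIV (\<lambda>i. if i < n then {0..1} else {0})"
  unfolding cube_def PiE_iff by (auto split: if_splits)

lemma compact_cube: "compact (cube n)"
proof -
  have "compactin (product_topology (\<lambda>i. euclidean) UNIV) (cube n)"
    unfolding cube_eq_PiE by (subst compactin_PiE) auto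
  then show ?thesis
    by (simp add: euclidean_product_topology)
qed

lemma zero_in_cube: "(\<lambda>_. 0) \<in> cube n"
  by (simp add: cube_def)

lemma left_half_in_cube: "t \<in> cube n \<Longrightarrow> 0 < n \<Longrightarrow> t 0 \<le> 1/2 \<Longrightarrow> t(0 := 2 * t 0) \<in> cube n"
  by (auto simp: cube_def)

lemma right_half_in_cube: "t \<in> cube n \<Longrightarrow> 0 < n \<Longrightarrow> 1/2 \<le> t 0 \<Longrightarrow> t(0 := 2 * t 0 - 1) \<in> cube n"
  by (auto simp: cube_def)

lemma left_half_in_cube_boundary:
  assumes "t \<in> cube n" "0 < n" "t 0 \<le> 1/2" "t \<in> cube_boundary n \<or> t 0 = 1/2"
  shows "t(0 := 2 * t 0) \<in> cube_boundary n"
proof -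
  have "\<exists>i<n. (t(0 := 2 * t 0)) i = 0 \<or> (t(0 := 2 * t 0)) i = 1"
  proof (cases "t 0 = 1/2")
    case False
    then obtain i where "i < n" "t i = 0 \<or> t i = 1"
      using assms(4) by (auto simp: cube_boundary_def)
    then have "(t(0 := 2 * t 0)) i = 0 \<or> (t(0 := 2 * t 0)) i = 1"
      using assms(3) by (cases "i = 0") auto
    with \<open>i < n\<close> show ?thesis
      by blast
  qed (use assms(2) in auto)
  then show ?thesis
    using left_half_in_cube[OF assms(1-3)] by (simp add: cube_boundary_def)
qed

lemma right_half_in_cube_boundary:
  assumes "t \<in> cube n" "0 < n" "1/2 \<le> t 0" "t \<in> cube_boundary n \<or> t 0 = 1/2"
  shows "t(0 := 2 * t 0 - 1) \<in> cube_boundary n"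
proof -
  have "\<exists>i<n. (t(0 := 2 * t 0 - 1)) i = 0 \<or> (t(0 := 2 * t 0 - 1)) i = 1"
  proof (cases "t 0 = 1/2")
    case False
    then obtain i where "i < n" "t i = 0 \<or> t i = 1"
      using assms(4) by (auto simp: cube_boundary_def)
    then have "(t(0 := 2 * t 0 - 1)) i = 0 \<or> (t(0 := 2 * t 0 - 1)) i = 1"
      using assms(3) by (cases "i = 0") auto
    with \<open>i < n\<close> show ?thesis
      by blast
  qed (use assms(2) in auto)
  then show ?thesis
    using right_half_in_cube[OF assms(1-3)] by (simp add: cube_boundary_def)
qed

lemma continuous_on_coordinate: "continuous_on S (\<lambda>t::'a \<Rightarrow> 'b::topological_space. t i)"
  by (rule continuous_on_subset[OF continuous_on_product_coordinates]) simp

lemma continuous_on_stretch_first: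
  fixes f :: "'a::topological_space \<Rightarrow> nat \<Rightarrow> real"
  assumes "continuous_on S f"
  shows "continuous_on S (\<lambda>x. (f x)(0 := 2 * f x 0 - c))"
proof (rule continuous_on_coordinatewise_then_product)
  have coord: "continuous_on S (\<lambda>x. f x i)" for i
    using continuous_on_compose[OF assms continuous_on_coordinate] by (simp add: o_def)
  fix i
  show "continuous_on S (\<lambda>x. ((f x)(0 := 2 * f x 0 - c)) i)"
    by (cases "i = 0") (simp_all add: coord continuous_intros)
qed

lemma continuous_on_concat_cube_family:
  fixes H K :: "'b::topological_space \<times> (nat \<Rightarrow> real) \<Rightarrow> 'a::topological_space"
  assumes n: "0 < n"
    and H: "continuous_on (S \<times> cube n) H" and K: "continuous_on (S \<times> cube n) K"
    and H_bd: "\<And>s t. s \<in> S \<Longrightarrow> t \<in> cube_boundary n \<Longrightarrow> H (s, t) = x0"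
    and K_bd: "\<And>s t. s \<in> S \<Longrightarrow> t \<in> cube_boundary n \<Longrightarrow> K (s, t) = x0"
  shows "continuous_on (S \<times> cube n)
           (\<lambda>p. concat_cube (\<lambda>t. H (fst p, t)) (\<lambda>t. K (fst p, t)) (snd p))"
proof -
  have stretch: "continuous_on A (\<lambda>p::'b \<times> (nat \<Rightarrow> real). (fst p, (snd p)(0 := 2 * snd p 0 - c)))"
    for A and c :: real
    by (intro continuous_intros continuous_on_stretch_first)
  have left: "continuous_on {p \<in> S \<times> cube n. snd p 0 \<le> 1/2} (\<lambda>p. H (fst p, (snd p)(0 := 2 * snd p 0)))"
    by (rule continuous_on_compose2[OF H stretch[of _ 0, simplified]])
       (auto intro: left_half_in_cube[OF _ n])
  have right: "continuous_on {p \<in> S \<times> cube n. 1/2 \<le> snd p 0} (\<lambda>p. K (fst p, (snd p)(0 := 2 * snd p 0 - 1)))"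
    by (rule continuous_on_compose2[OF K stretch])
       (auto intro: right_half_in_cube[OF _ n])
  show ?thesis
    unfolding concat_cube_def
  proof (rule continuous_on_cases_le[OF left right])
    show "continuous_on (S \<times> cube n) (\<lambda>p. snd p 0)"
      using continuous_on_compose[OF continuous_on_snd[OF continuous_on_id] continuous_on_coordinate]
      by (simp add: o_def)
    fix p
    assume "p \<in> S \<times> cube n" "snd p 0 = 1/2"
    then show "H (fst p, (snd p)(0 := 2 * snd p 0)) = K (fst p, (snd p)(0 := 2 * snd p 0 - 1))"
      using H_bd K_bd left_half_in_cube_boundary[OF _ n] right_half_in_cube_boundary[OF _ n]
      by (auto simp: mem_Times_iff)
  qed
qed

lemma homotopic_with_canon_iff:
  "homotopic_with_canon P S T f g \<longleftrightarrow>
   (\<exists>h. continuous_on ({0..1::real} \<times> S) h \<and> h ` ({0..1} \<times> S) \<subseteq> T \<and>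
        (\<forall>x. h (0, x) = f x) \<and> (\<forall>x. h (1, x) = g x) \<and> (\<forall>t\<in>{0..1}. P (\<lambda>x. h (t, x))))"
  unfolding homotopic_with_def prod_topology_subtopology_eu continuous_map_subtopology_eu
    image_subset_iff_funcset
  by blast

lemma homotopic_concat_cube:
  assumes n: "0 < n"
    and "homotopic_with_canon (\<lambda>h. \<forall>t\<in>cube_boundary n. h t = x0) (cube n) X \<alpha> \<alpha>'"
    and "homotopic_with_canon (\<lambda>h. \<forall>t\<in>cube_boundary n. h t = x0) (cube n) X \<beta> \<beta>'"
  shows "homotopic_with_canon (\<lambda>h. \<forall>t\<in>cube_boundary n. h t = x0) (cube n) X
           (concat_cube \<alpha> \<beta>) (concat_cube \<alpha>' \<beta>')"
proof -
  obtain H where H: "continuous_on ({0..1::real} \<times> cube n) H" "H ` ({0..1} \<times> cube n) \<subseteq> X"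
    "\<forall>t. H (0, t) = \<alpha> t" "\<forall>t. H (1, t) = \<alpha>' t"
    and H_bd: "\<forall>s\<in>{0..1}. \<forall>t\<in>cube_boundary n. H (s, t) = x0"
    using assms(2) unfolding homotopic_with_canon_iff by blast
  obtain K where K: "continuous_on ({0..1::real} \<times> cube n) K" "K ` ({0..1} \<times> cube n) \<subseteq> X"
    "\<forall>t. K (0, t) = \<beta> t" "\<forall>t. K (1, t) = \<beta>' t"
    and K_bd: "\<forall>s\<in>{0..1}. \<forall>t\<in>cube_boundary n. K (s, t) = x0"
    using assms(3) unfolding homotopic_with_canon_iff by blast
  let ?L = "\<lambda>p. concat_cube (\<lambda>t. H (fst p, t)) (\<lambda>t. K (fst p, t)) (snd p)"
  have "continuous_on ({0..1} \<times> cube n) ?L"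
    using continuous_on_concat_cube_family[OF n H(1) K(1)] H_bd K_bd by blast
  moreover have "?L ` ({0..1} \<times> cube n) \<subseteq> X"
    using H(2) K(2) left_half_in_cube[OF _ n] right_half_in_cube[OF _ n]
    by (force simp: concat_cube_def)
  moreover have "\<forall>s\<in>{0..1}. \<forall>t\<in>cube_boundary n. ?L (s, t) = x0"
    using H_bd K_bd left_half_in_cube_boundary[OF _ n] right_half_in_cube_boundary[OF _ n]
    by (auto simp: concat_cube_def cube_boundary_def)
  ultimately show ?thesis
    unfolding homotopic_with_canon_iff using H(3,4) K(3,4)
    by (intro exI[of _ ?L]) (simp add: concat_cube_def)
qed

lemma htpy_rel_iff:
  "(f, g) \<in> htpy_rel n X x0 \<longleftrightarrow>
     homotopic_with_canon (\<lambda>h. \<forall>t\<in>cube_boundary n. h t = x0) (cube n) X f g"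
proof
  assume h: "homotopic_with_canon (\<lambda>h. \<forall>t\<in>cube_boundary n. h t = x0) (cube n) X f g"
  show "(f, g) \<in> htpy_rel n X x0"
    using h homotopic_with_imp_continuous[OF h] homotopic_with_imp_subset1[OF h]
      homotopic_with_imp_subset2[OF h] homotopic_with_imp_property[OF h]
    unfolding htpy_rel_def Omega_def by simp
qed (simp add: htpy_rel_def)

lemma equiv_htpy_rel: "equiv (Omega n X x0) (htpy_rel n X x0)"
proof (rule equivI)
  show "htpy_rel n X x0 \<subseteq> Omega n X x0 \<times> Omega n X x0"
    by (auto simp: htpy_rel_def)
  show "refl_on (Omega n X x0) (htpy_rel n X x0)"
    by (auto simp: refl_on_def htpy_rel_def Omega_def continuous_map_subtopology_eu
        image_subset_iff_funcset)
  show "sym (htpy_rel n X x0)"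
    by (auto simp: sym_def htpy_rel_iff dest: homotopic_with_symD)
  show "trans (htpy_rel n X x0)"
    by (auto simp: trans_def htpy_rel_iff dest: homotopic_with_trans)
qed

lemma htpy_rel_concat_cube:
  "0 < n \<Longrightarrow> (\<alpha>, \<alpha>') \<in> htpy_rel n X x0 \<Longrightarrow> (\<beta>, \<beta>') \<in> htpy_rel n X x0 \<Longrightarrow>
    (concat_cube \<alpha> \<beta>, concat_cube \<alpha>' \<beta>') \<in> htpy_rel n X x0"
  unfolding htpy_rel_iff by (rule homotopic_concat_cube)

lemma pi_n_nonempty: "c \<in> pi_n n X x0 \<Longrightarrow> c \<noteq> {}"
  using in_quotient_imp_non_empty[OF equiv_htpy_rel] unfolding pi_n_def by blast

lemma pi_n_subset_Omega: "c \<in> pi_n n X x0 \<Longrightarrow> c \<subseteq> Omega n X x0"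
  using in_quotient_imp_subset[OF equiv_htpy_rel] unfolding pi_n_def by blast

lemma continuous_on_class: "c \<in> pi_n n X x0 \<Longrightarrow> f \<in> c \<Longrightarrow> continuous_on (cube n) f"
  using pi_n_subset_Omega unfolding Omega_def by blast

lemma const_in_Omega: "x0 \<in> X \<Longrightarrow> (\<lambda>t. x0) \<in> Omega n X x0"
  by (auto simp: Omega_def)

lemma pi_one_in_pi_n: "x0 \<in> X \<Longrightarrow> pi_one n X x0 \<in> pi_n n X x0"
  unfolding pi_one_def pi_n_def by (rule quotientI[OF const_in_Omega])

lemma concat_cube_in_pi_one:
  assumes "0 < n" "x0 \<in> X" "\<gamma> \<in> pi_one n X x0" "\<delta> \<in> pi_one n X x0"
  shows "concat_cube \<gamma> \<delta> \<in> pi_one n X x0"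
proof -
  have "(concat_cube (\<lambda>t. x0) (\<lambda>t. x0), concat_cube \<gamma> \<delta>) \<in> htpy_rel n X x0"
    using assms by (intro htpy_rel_concat_cube) (auto simp: pi_one_def)
  moreover have "concat_cube (\<lambda>t. x0) (\<lambda>t. x0) = (\<lambda>t. x0)"
    by (simp add: concat_cube_def fun_eq_iff)
  ultimately show ?thesis
    by (simp add: pi_one_def)
qed

lemma some_in_pi_n: "c \<in> pi_n n X x0 \<Longrightarrow> (SOME \<alpha>. \<alpha> \<in> c) \<in> c"
  using pi_n_nonempty some_in_eq by blast

lemma concat_cube_in_pi_mult:
  assumes "0 < n" "a \<in> pi_n n X x0" "b \<in> pi_n n X x0" "\<alpha> \<in> a" "\<beta> \<in> b"
  shows "concat_cube \<alpha> \<beta> \<in> pi_mult n X x0 a b"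
proof -
  have "(SOME \<alpha>. \<alpha> \<in> c, \<gamma>) \<in> htpy_rel n X x0" if "c \<in> pi_n n X x0" "\<gamma> \<in> c" for c \<gamma>
    using in_quotient_imp_in_rel[OF equiv_htpy_rel] some_in_pi_n that unfolding pi_n_def by blast
  then show ?thesis
    unfolding pi_mult_def using assms by (auto intro: htpy_rel_concat_cube)
qed

lemma pi_mult_in_pi_n:
  assumes "0 < n" "a \<in> pi_n n X x0" "b \<in> pi_n n X x0"
  shows "pi_mult n X x0 a b \<in> pi_n n X x0"
proof -
  let ?\<alpha>\<beta> = "concat_cube (SOME \<alpha>. \<alpha> \<in> a) (SOME \<beta>. \<beta> \<in> b)"
  have "?\<alpha>\<beta> \<in> pi_mult n X x0 a b"
    by (rule concat_cube_in_pi_mult[OF assms some_in_pi_n[OF assms(2)] some_in_pi_n[OF assms(3)]])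
  then have "?\<alpha>\<beta> \<in> Omega n X x0"
    by (simp add: pi_mult_def htpy_rel_def)
  then show ?thesis
    unfolding pi_mult_def pi_n_def by (rule quotientI)
qed

lemma bdd_above_dist_cube:
  assumes "continuous_on (cube n) \<alpha>" "continuous_on (cube n) \<beta>"
  shows "bdd_above ((\<lambda>t. dist (\<alpha> t) (\<beta> t)) ` cube n)"
  by (intro bounded_imp_bdd_above compact_imp_bounded compact_continuous_image
      continuous_on_dist assms compact_cube)

lemma dist_le_mu:
  assumes "continuous_on (cube n) \<alpha>" "continuous_on (cube n) \<beta>" "t \<in> cube n"
  shows "dist (\<alpha> t) (\<beta> t) \<le> mu n \<alpha> \<beta>"
  unfolding mu_def by (rule cSUP_upper[OF assms(3) bdd_above_dist_cube[OF assms(1,2)]])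

lemma mu_nonneg:
  assumes "continuous_on (cube n) \<alpha>" "continuous_on (cube n) \<beta>"
  shows "0 \<le> mu n \<alpha> \<beta>"
  using dist_le_mu[OF assms zero_in_cube] zero_le_dist order_trans by blast

lemma mu_concat_cube_le:
  assumes n: "0 < n"
    and "continuous_on (cube n) \<alpha>" "continuous_on (cube n) \<gamma>"
    and "continuous_on (cube n) \<beta>" "continuous_on (cube n) \<delta>"
  shows "mu n (concat_cube \<alpha> \<beta>) (concat_cube \<gamma> \<delta>) \<le> max (mu n \<alpha> \<gamma>) (mu n \<beta> \<delta>)"
  unfolding mu_def[of n "concat_cube \<alpha> \<beta>"]
proof (rule cSUP_least)
  show "cube n \<noteq> {}"
    using zero_in_cube by blast
  fix t
  assume t: "t \<in> cube n"
  show "dist (concat_cube \<alpha> \<beta> t) (concat_cube \<gamma> \<delta> t) \<le> max (mu n \<alpha> \<gamma>) (mu n \<beta> \<delta>)"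
  proof (cases "t 0 \<le> 1/2")
    case True
    then show ?thesis
      using dist_le_mu[OF assms(2,3) left_half_in_cube[OF t n]] by (simp add: concat_cube_def)
  next
    case False
    then show ?thesis
      using dist_le_mu[OF assms(4,5) right_half_in_cube[OF t n]] by (simp add: concat_cube_def)
  qed
qed

lemma rho_le_mu:
  assumes "\<forall>f\<in>c \<union> e. continuous_on (cube n) f" "\<alpha> \<in> c" "\<gamma> \<in> e"
  shows "rho n c e \<le> mu n \<alpha> \<gamma>"
  unfolding rho_def
proof (rule cInf_lower)
  show "mu n \<alpha> \<gamma> \<in> {mu n \<alpha> \<gamma> |\<alpha> \<gamma>. \<alpha> \<in> c \<and> \<gamma> \<in> e}"
    using assms(2,3) by blast
  show "bdd_below {mu n \<alpha> \<gamma> |\<alpha> \<gamma>. \<alpha> \<in> c \<and> \<gamma> \<in> e}"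
    using assms(1) by (auto intro!: bdd_belowI[of _ 0] mu_nonneg)
qed

lemma rho_approx:
  assumes "c \<noteq> {}" "e \<noteq> {}" "0 < \<epsilon>"
  obtains \<alpha> \<gamma> where "\<alpha> \<in> c" "\<gamma> \<in> e" "mu n \<alpha> \<gamma> < rho n c e + \<epsilon>"
proof -
  let ?M = "{mu n \<alpha> \<gamma> |\<alpha> \<gamma>. \<alpha> \<in> c \<and> \<gamma> \<in> e}"
  have ne: "?M \<noteq> {}"
    using assms(1,2) by blast
  have "Inf ?M < rho n c e + \<epsilon>"
    using assms(3) by (simp add: rho_def)
  then obtain m where "m \<in> ?M" "m < rho n c e + \<epsilon>"
    using cInf_lessD[OF ne] by blast
  then show ?thesis
    using that by blast
qed

theorem lemma4p4:
  fixes X :: "'a::metric_space set" and x0 :: 'a and n :: nat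
  assumes "x0 \<in> X" and "n \<ge> 1"
    and "a \<in> pi_n n X x0" and "b \<in> pi_n n X x0"
  shows "rho n (pi_mult n X x0 a b) (pi_one n X x0)
           \<le> max (rho n a (pi_one n X x0)) (rho n b (pi_one n X x0))"
proof (rule field_le_epsilon)
  let ?e = "pi_one n X x0" and ?ab = "pi_mult n X x0 a b"
  have n: "0 < n"
    using assms(2) by simp
  have e: "?e \<in> pi_n n X x0"
    using pi_one_in_pi_n[OF assms(1)] .
  fix \<epsilon> :: real
  assume "0 < \<epsilon>"
  obtain \<alpha> \<gamma> where \<alpha>: "\<alpha> \<in> a" and \<gamma>: "\<gamma> \<in> ?e" and \<alpha>\<gamma>: "mu n \<alpha> \<gamma> < rho n a ?e + \<epsilon>"
    using rho_approx[OF pi_n_nonempty[OF assms(3)] pi_n_nonempty[OF e] \<open>0 < \<epsilon>\<close>] .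
  obtain \<beta> \<delta> where \<beta>: "\<beta> \<in> b" and \<delta>: "\<delta> \<in> ?e" and \<beta>\<delta>: "mu n \<beta> \<delta> < rho n b ?e + \<epsilon>"
    using rho_approx[OF pi_n_nonempty[OF assms(4)] pi_n_nonempty[OF e] \<open>0 < \<epsilon>\<close>] .
  have "rho n ?ab ?e \<le> mu n (concat_cube \<alpha> \<beta>) (concat_cube \<gamma> \<delta>)"
  proof (rule rho_le_mu)
    show "concat_cube \<alpha> \<beta> \<in> ?ab"
      by (rule concat_cube_in_pi_mult[OF n assms(3,4) \<alpha> \<beta>])
    show "concat_cube \<gamma> \<delta> \<in> ?e"
      by (rule concat_cube_in_pi_one[OF n assms(1) \<gamma> \<delta>])
    show "\<forall>f\<in>?ab \<union> ?e. continuous_on (cube n) f"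
      using continuous_on_class[OF pi_mult_in_pi_n[OF n assms(3,4)]] continuous_on_class[OF e]
      by blast
  qed
  also have "\<dots> \<le> max (mu n \<alpha> \<gamma>) (mu n \<beta> \<delta>)"
    using continuous_on_class assms(3,4) e \<alpha> \<beta> \<gamma> \<delta> by (intro mu_concat_cube_le[OF n]) blast+
  also have "\<dots> \<le> max (rho n a ?e) (rho n b ?e) + \<epsilon>"
    using \<alpha>\<gamma> \<beta>\<delta> by linarith
  finally show "rho n ?ab ?e \<le> max (rho n a ?e) (rho n b ?e) + \<epsilon>" .
qed

end
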